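(* Let $R$ be a ring, $n$ a positive integer, and $I$ a proper ideal of $R$. Then the following are equivalent: (1) $I$ is strongly weakly $n$-absorbing; (2) for any ideals $I_1,\dots,I_{n+1}$ of $R$ with $I\subseteq I_1$, if $0\neq I_1\cdots I_{n+1}\subseteq I$ then there are $n$ of the $I_i$'s whose product is contained in $I$.
   Context: All rings are commutative with $1\neq0$. A proper ideal $I$ of $R$ is strongly weakly $n$-absorbing if whenever $0\neq I_1\cdots I_{n+1}\subseteq I$ for ideals $I_1,\dots,I_{n+1}$ of $R$, there are $n$ of the $I_i$'s whose product is contained in $I$. *)

theory Defs
  imports "HOL-Algebra.Ideal_Product"
begin

definition ideals_prod :: "('a, 'b) ring_scheme \<Rightarrow> 'a set list \<Rightarrow> 'a set" where
  "ideals_prod R Is = foldr (ideal_prod R) Is (carrier R)"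

definition omit :: "nat \<Rightarrow> 'a list \<Rightarrow> 'a list" where
  "omit k xs = take k xs @ drop (Suc k) xs"

definition strongly_weakly_n_absorbing :: "('a, 'b) ring_scheme \<Rightarrow> nat \<Rightarrow> 'a set \<Rightarrow> bool" where
  "strongly_weakly_n_absorbing R n I \<longleftrightarrow>
     ideal I R \<and> I \<noteq> carrier R \<and>
     (\<forall>Is. length Is = Suc n \<and> (\<forall>J\<in>set Is. ideal J R) \<and>
           ideals_prod R Is \<noteq> {\<zero>\<^bsub>R\<^esub>} \<and> ideals_prod R Is \<subseteq> I
       \<longrightarrow> (\<exists>k<Suc n. ideals_prod R (omit k Is) \<subseteq> I))"

end

theory Submission
  imports Defs
begin

text \<open>Given ideals with
  \<open>0 \<noteq> J I\<^sub>2\<cdots>I\<^sub>n\<^sub>+\<^sub>1 \<subseteq> I\<close>, replace the first factor by \<open>J + I\<close>: since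
  \<open>(J + I) P = J P + I P\<close> and \<open>I P \<subseteq> I\<close>, the product stays inside \<open>I\<close>, and it can only
  grow, so it stays nonzero. The restricted condition then yields \<open>n\<close> factors of the
  enlarged list with product in \<open>I\<close>, and the corresponding factors of the original list
  have a smaller product.\<close>

lemma ideal_prod_mono:
  assumes "A \<subseteq> A'" "B \<subseteq> B'"
  shows "ideal_prod R A B \<subseteq> ideal_prod R A' B'"
proof
  fix s assume "s \<in> ideal_prod R A B"
  then show "s \<in> ideal_prod R A' B'"
    by (induct s rule: ideal_prod.induct) (use assms in \<open>auto intro: ideal_prod.intros\<close>)
qed

lemma ideals_prod_mono:
  "list_all2 (\<subseteq>) Xs Ys \<Longrightarrow> ideals_prod R Xs \<subseteq> ideals_prod R Ys"
  by (induct rule: list_all2_induct) (simp_all add: ideals_prod_def ideal_prod_mono)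

lemma (in ring) ideals_prod_is_ideal:
  "\<forall>J\<in>set Xs. ideal J R \<Longrightarrow> ideal (ideals_prod R Xs) R"
  by (induct Xs) (auto simp: ideals_prod_def oneideal ideal_prod_is_ideal)

lemma list_all2_omit:
  "list_all2 P xs ys \<Longrightarrow> list_all2 P (omit k xs) (omit k ys)"
  unfolding omit_def by (intro list_all2_appendI list_all2_takeI list_all2_dropI)

lemma (in ring) ideal_subset_add_ideals:
  assumes "ideal J R" "ideal I R"
  shows "J \<subseteq> J <+>\<^bsub>R\<^esub> I" and "I \<subseteq> J <+>\<^bsub>R\<^esub> I"
  using union_genideal[OF assms] genideal_self[of "J \<union> I"]
    ideal.Icarr[OF assms(1)] ideal.Icarr[OF assms(2)] by blast+

lemma (in cring) ideal_prod_add_ideal_left_subset: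
  assumes J: "ideal J R" and I: "ideal I R" and P: "ideal P R"
    and JP: "ideal_prod R J P \<subseteq> I"
  shows "ideal_prod R (J <+>\<^bsub>R\<^esub> I) P \<subseteq> I"
proof -
  have "ideal_prod R (J <+>\<^bsub>R\<^esub> I) P = ideal_prod R J P <+>\<^bsub>R\<^esub> ideal_prod R I P"
    using ideal_prod_distr(2)[OF P J I] .
  also have "\<dots> = genideal R (ideal_prod R J P \<union> ideal_prod R I P)"
    using union_genideal[OF ideal_prod_is_ideal[OF J P] ideal_prod_is_ideal[OF I P]] by simp
  also have "\<dots> \<subseteq> I"
    using JP ideal_prod_inter[OF I P] by (intro genideal_minimal I) auto
  finally show ?thesis .
qed

lemma (in cring) ideals_prod_add_ideal_head_subset:
  assumes "ideal I R" "ideal J R" "\<forall>K\<in>set Js. ideal K R"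
    and "ideals_prod R (J # Js) \<subseteq> I"
  shows "ideals_prod R ((J <+>\<^bsub>R\<^esub> I) # Js) \<subseteq> I"
  using assms ideal_prod_add_ideal_left_subset[OF _ _ ideals_prod_is_ideal]
  by (simp add: ideals_prod_def)

lemma (in cring) enlarge_head_by_ideal:
  assumes I: "ideal I R" and ideals: "\<forall>J\<in>set Is. ideal J R" and "Is \<noteq> []"
    and nonzero: "ideals_prod R Is \<noteq> {\<zero>}" and inside: "ideals_prod R Is \<subseteq> I"
  obtains Is' where "list_all2 (\<subseteq>) Is Is'" "\<forall>J\<in>set Is'. ideal J R" "I \<subseteq> Is' ! 0"
    "ideals_prod R Is' \<noteq> {\<zero>}" "ideals_prod R Is' \<subseteq> I"
proof -
  obtain J Js where Is_eq: "Is = J # Js" using \<open>Is \<noteq> []\<close> by (cases Is) auto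
  have J: "ideal J R" and Js: "\<forall>K\<in>set Js. ideal K R" using ideals Is_eq by auto
  define J' where "J' = J <+>\<^bsub>R\<^esub> I"
  have J': "ideal J' R" "J \<subseteq> J'" "I \<subseteq> J'"
    unfolding J'_def using add_ideals ideal_subset_add_ideals J I by auto
  have larger: "list_all2 (\<subseteq>) Is (J' # Js)"
    using J' by (simp add: Is_eq list_all2_refl)
  have "ideals_prod R (J' # Js) \<subseteq> I"
    unfolding J'_def using ideals_prod_add_ideal_head_subset I J Js inside Is_eq by blast
  moreover have "ideals_prod R (J' # Js) \<noteq> {\<zero>}"
  proof
    assume "ideals_prod R (J' # Js) = {\<zero>}"
    moreover have "\<zero> \<in> ideals_prod R Is"
      using ideals_prod_is_ideal ideals by (blast intro: additive_subgroup.zero_closed ideal.axioms(1))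
    ultimately show False
      using ideals_prod_mono[OF larger] nonzero by blast
  qed
  ultimately show thesis
    using that[OF larger] J' Js by auto
qed

theorem mainTheorem12:
  fixes R :: "('a, 'b) ring_scheme" and n :: nat and I :: "'a set"
  assumes "cring R" and "\<one>\<^bsub>R\<^esub> \<noteq> \<zero>\<^bsub>R\<^esub>"
    and "n > 0"
    and "ideal I R" and "I \<noteq> carrier R"
  shows "strongly_weakly_n_absorbing R n I \<longleftrightarrow>
     (\<forall>Is. length Is = Suc n \<and> (\<forall>J\<in>set Is. ideal J R) \<and> I \<subseteq> Is ! 0 \<and>
           ideals_prod R Is \<noteq> {\<zero>\<^bsub>R\<^esub>} \<and> ideals_prod R Is \<subseteq> I
       \<longrightarrow> (\<exists>k<Suc n. ideals_prod R (omit k Is) \<subseteq> I))"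
    (is "_ \<longleftrightarrow> (\<forall>Is. ?restricted Is)")
proof
  assume "strongly_weakly_n_absorbing R n I"
  then show "\<forall>Is. ?restricted Is"
    unfolding strongly_weakly_n_absorbing_def by blast
next
  interpret cring R by fact
  assume restricted: "\<forall>Is. ?restricted Is"
  show "strongly_weakly_n_absorbing R n I"
    unfolding strongly_weakly_n_absorbing_def
  proof (intro conjI assms allI impI)
    fix Is
    assume Is: "length Is = Suc n \<and> (\<forall>J\<in>set Is. ideal J R) \<and>
      ideals_prod R Is \<noteq> {\<zero>\<^bsub>R\<^esub>} \<and> ideals_prod R Is \<subseteq> I"
    then obtain Is' where larger: "list_all2 (\<subseteq>) Is Is'"
      and Is': "\<forall>J\<in>set Is'. ideal J R" "I \<subseteq> Is' ! 0" "ideals_prod R Is' \<noteq> {\<zero>\<^bsub>R\<^esub>}"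
        "ideals_prod R Is' \<subseteq> I"
      using enlarge_head_by_ideal[OF \<open>ideal I R\<close>] by (metis list.size(3) nat.distinct(1))
    have "length Is' = Suc n" using larger Is by (simp add: list_all2_lengthD[symmetric])
    then obtain k where "k < Suc n" "ideals_prod R (omit k Is') \<subseteq> I"
      using restricted Is' by blast
    then show "\<exists>k<Suc n. ideals_prod R (omit k Is) \<subseteq> I"
      using ideals_prod_mono[OF list_all2_omit[OF larger]] by blast
  qed
qed

end
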